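(* Let $\mathcal{X},\mathcal{Y},\mathcal{Z}$ be bounded subsets of a metric space $(\mathcal{S},\eta)$, let $X$ be an uncertain variable with marginal range $[[X]]=\mathcal{X}$, and let $Y=g(X)$ and $Z=h(X)$, where $g:\mathcal{X}\to\mathcal{Y}$ is $L$-invertible and $h:\mathcal{X}\to\mathcal{Z}$ is Lipschitz. Then there exists $L_{Z|Y}\ge0$ such that $\mathcal{H}([[Z|y^1]],[[Z|y^2]])\le L_{Z|Y}\,\eta(y^1,y^2)$ for all $y^1,y^2\in[[Y]]$.
   Context: Uncertain variables: fix a sample space $\Omega$; an uncertain variable with values in a set $\mathcal{X}$ is a map $X:\Omega\to\mathcal{X}$, with marginal range $[[X]]:=\{X(\omega):\omega\in\Omega\}$; for uncertain variables $Z,Y$ and $y\in[[Y]]$, the conditional range is $[[Z|y]]:=\{Z(\omega):\omega\in\Omega,\ Y(\omega)=y\}$. Hausdorff distance: for nonempty $\mathcal{A},\mathcal{B}\subseteq\mathcal{S}$, $\mathcal{H}(\mathcal{A},\mathcal{B}):=\max\{\sup_{a\in\mathcal{A}}\inf_{b\in\mathcal{B}}\eta(a,b),\sup_{b\in\mathcal{B}}\inf_{a\in\mathcal{A}}\eta(a,b)\}$. A function $g:\mathcal{X}\to\mathcal{Y}$ is $L$-invertible if there is $L_{g^{-1}}\ge0$ with $\mathcal{H}(g^{-1}(y^1),g^{-1}(y^2))\le L_{g^{-1}}\eta(y^1,y^2)$ for all $y^1,y^2$ in $g(\mathcal{X})$, where $g^{-1}(y)=\{x\in\mathcal{X}:g(x)=y\}$.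 *)

theory Defs
  imports "HOL-Analysis.Analysis"
begin

definition marg_range :: "'w set \<Rightarrow> ('w \<Rightarrow> 'x) \<Rightarrow> 'x set" where
  "marg_range \<Omega> X = {X \<omega> | \<omega>. \<omega> \<in> \<Omega>}"

definition cond_range :: "'w set \<Rightarrow> ('w \<Rightarrow> 'z) \<Rightarrow> ('w \<Rightarrow> 'y) \<Rightarrow> 'y \<Rightarrow> 'z set" where
  "cond_range \<Omega> Z Y y = {Z \<omega> | \<omega>. \<omega> \<in> \<Omega> \<and> Y \<omega> = y}"

text \<open>Hausdorff distance as in the paper (used only on nonempty bounded sets,
  where the real-valued Sup/Inf are the genuine suprema/infima).\<close>
definition hausdorff :: "'s::metric_space set \<Rightarrow> 's set \<Rightarrow> real" where
  "hausdorff A B = max (SUP a\<in>A. INF b\<in>B. dist a b) (SUP b\<in>B. INF a\<in>A. dist a b)"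

definition L_invertible :: "'s::metric_space set \<Rightarrow> ('s \<Rightarrow> 's) \<Rightarrow> bool" where
  "L_invertible A g \<longleftrightarrow> (\<exists>L\<ge>0. \<forall>y1\<in>g ` A. \<forall>y2\<in>g ` A.
      hausdorff {x\<in>A. g x = y1} {x\<in>A. g x = y2} \<le> L * dist y1 y2)"

end

theory Submission
  imports Defs
begin

text \<open>Since Y and Z are both functions of X, the conditional range of Z given y is the image
  under h of the fibre of g over y. A C-Lipschitz map enlarges Hausdorff distances by at most
  the factor C, and the fibres of the L-invertible g move by at most L times the distance of
  their base points, so C * L is a Lipschitz constant for the conditional range.\<close>

definition hausdorff_excess :: "'s::metric_space set \<Rightarrow> 's set \<Rightarrow> real" where
  "hausdorff_excess A B = (SUP a\<in>A. INF b\<in>B. dist a b)"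

lemma hausdorff_eq_max_excess:
  "hausdorff A B = max (hausdorff_excess A B) (hausdorff_excess B A)"
  by (simp add: hausdorff_def hausdorff_excess_def dist_commute)

lemma INF_dist_image_le:
  fixes f :: "'a::metric_space \<Rightarrow> 'b::metric_space"
  assumes lip: "C-lipschitz_on S f" and "a \<in> S" and "B \<subseteq> S" and "B \<noteq> {}"
  shows "(INF b\<in>B. dist (f a) (f b)) \<le> C * (INF b\<in>B. dist a b)"
proof -
  have "0 \<le> C" using lip by (rule lipschitz_on_nonneg)
  have pointwise: "(INF b'\<in>B. dist (f a) (f b')) \<le> C * dist a b" if "b \<in> B" for b
  proof -
    have "(INF b'\<in>B. dist (f a) (f b')) \<le> dist (f a) (f b)"
      by (rule cINF_lower[OF _ \<open>b \<in> B\<close>]) (auto intro: bdd_belowI2[where m=0])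
    also have "\<dots> \<le> C * dist a b"
      using lipschitz_onD[OF lip] \<open>a \<in> S\<close> \<open>b \<in> B\<close> \<open>B \<subseteq> S\<close> by blast
    finally show ?thesis .
  qed
  show ?thesis
  proof (cases "C = 0")
    case True
    then show ?thesis using pointwise \<open>B \<noteq> {}\<close> by auto
  next
    case False
    with \<open>0 \<le> C\<close> have "C > 0" by simp
    have "(INF b\<in>B. dist (f a) (f b)) / C \<le> (INF b\<in>B. dist a b)"
      using pointwise \<open>C > 0\<close> \<open>B \<noteq> {}\<close>
      by (intro cINF_greatest) (simp_all add: divide_le_eq mult.commute)
    then show ?thesis using \<open>C > 0\<close> by (simp add: divide_le_eq mult.commute)
  qed
qed

lemma hausdorff_excess_image_le:
  fixes f :: "'a::metric_space \<Rightarrow> 'b::metric_space"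
  assumes lip: "C-lipschitz_on S f" and "A \<subseteq> S" and "B \<subseteq> S"
    and "A \<noteq> {}" and "B \<noteq> {}" and "bounded S"
  shows "hausdorff_excess (f ` A) (f ` B) \<le> C * hausdorff_excess A B"
proof -
  have C0: "0 \<le> C" using lip by (rule lipschitz_on_nonneg)
  obtain e where e: "\<forall>x\<in>S. \<forall>y\<in>S. dist x y \<le> e"
    using \<open>bounded S\<close> bounded_two_points by blast
  obtain b0 where b0: "b0 \<in> B" using \<open>B \<noteq> {}\<close> by blast
  \<comment> \<open>the only use of boundedness: on an unbounded set the real SUP is a junk value\<close>
  have bdd: "bdd_above ((\<lambda>a. INF b\<in>B. dist a b) ` A)"
  proof (rule bdd_aboveI2)
    fix a assume "a \<in> A"
    have "(INF b\<in>B. dist a b) \<le> dist a b0"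
      by (rule cINF_lower[OF _ b0]) (auto intro: bdd_belowI2[where m=0])
    also have "\<dots> \<le> e" using e \<open>a \<in> A\<close> b0 assms by blast
    finally show "(INF b\<in>B. dist a b) \<le> e" .
  qed
  have "(INF b\<in>B. dist (f a) (f b)) \<le> C * hausdorff_excess A B" if "a \<in> A" for a
  proof -
    have "(INF b\<in>B. dist (f a) (f b)) \<le> C * (INF b\<in>B. dist a b)"
      using that assms by (intro INF_dist_image_le[OF lip]) auto
    also have "\<dots> \<le> C * hausdorff_excess A B"
      unfolding hausdorff_excess_def by (rule mult_left_mono[OF cSUP_upper[OF that bdd] C0])
    finally show ?thesis .
  qed
  then show ?thesis
    unfolding hausdorff_excess_def image_image using \<open>A \<noteq> {}\<close>
    by (intro cSUP_least) (simp_all add: hausdorff_excess_def)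
qed

lemma hausdorff_image_le:
  fixes f :: "'a::metric_space \<Rightarrow> 'b::metric_space"
  assumes "C-lipschitz_on S f" and "A \<subseteq> S" and "B \<subseteq> S"
    and "A \<noteq> {}" and "B \<noteq> {}" and "bounded S"
  shows "hausdorff (f ` A) (f ` B) \<le> C * hausdorff A B"
proof -
  have "0 \<le> C" using assms(1) by (rule lipschitz_on_nonneg)
  moreover have "hausdorff_excess (f ` A) (f ` B) \<le> C * hausdorff_excess A B"
    and "hausdorff_excess (f ` B) (f ` A) \<le> C * hausdorff_excess B A"
    using assms by (auto intro: hausdorff_excess_image_le)
  ultimately show ?thesis
    unfolding hausdorff_eq_max_excess by (auto simp: max_mult_distrib_left intro: max.mono)
qed

lemma marg_range_comp: "marg_range \<Omega> (g \<circ> X) = g ` marg_range \<Omega> X"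
  unfolding marg_range_def by auto

lemma cond_range_comp:
  "cond_range \<Omega> (h \<circ> X) (g \<circ> X) y = h ` {x \<in> marg_range \<Omega> X. g x = y}"
  unfolding cond_range_def marg_range_def by auto

theorem lemma6:
  fixes \<Omega> :: "'w set" and X :: "'w \<Rightarrow> 's::metric_space"
    and g h :: "'s \<Rightarrow> 's" and XX YY ZZ :: "'s set"
  assumes "bounded XX" and "bounded YY" and "bounded ZZ"
    and "marg_range \<Omega> X = XX"
    and "g ` XX \<subseteq> YY" and "h ` XX \<subseteq> ZZ"
    and "L_invertible XX g"
    and "\<exists>C. C-lipschitz_on XX h"
  shows "\<exists>LZY\<ge>0. \<forall>y1\<in>marg_range \<Omega> (g \<circ> X). \<forall>y2\<in>marg_range \<Omega> (g \<circ> X).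
           hausdorff (cond_range \<Omega> (h \<circ> X) (g \<circ> X) y1) (cond_range \<Omega> (h \<circ> X) (g \<circ> X) y2)
             \<le> LZY * dist y1 y2"
proof -
  obtain C where lip: "C-lipschitz_on XX h" using assms(8) by blast
  have "0 \<le> C" using lip by (rule lipschitz_on_nonneg)
  obtain L where "L \<ge> 0" and L: "\<forall>y1\<in>g ` XX. \<forall>y2\<in>g ` XX.
      hausdorff {x\<in>XX. g x = y1} {x\<in>XX. g x = y2} \<le> L * dist y1 y2"
    using assms(7) unfolding L_invertible_def by blast
  have "hausdorff (cond_range \<Omega> (h \<circ> X) (g \<circ> X) y1) (cond_range \<Omega> (h \<circ> X) (g \<circ> X) y2)
          \<le> (C * L) * dist y1 y2" if "y1 \<in> g ` XX" and "y2 \<in> g ` XX" for y1 y2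
  proof -
    have "hausdorff (cond_range \<Omega> (h \<circ> X) (g \<circ> X) y1) (cond_range \<Omega> (h \<circ> X) (g \<circ> X) y2)
        \<le> C * hausdorff {x\<in>XX. g x = y1} {x\<in>XX. g x = y2}"
      unfolding cond_range_comp assms(4)
      using that by (intro hausdorff_image_le[OF lip _ _ _ _ assms(1)]) auto
    also have "\<dots> \<le> C * (L * dist y1 y2)"
      using L that \<open>0 \<le> C\<close> by (intro mult_left_mono) auto
    finally show ?thesis by (simp add: mult.assoc)
  qed
  then show ?thesis
    using \<open>0 \<le> C\<close> \<open>L \<ge> 0\<close> unfolding marg_range_comp assms(4) by (intro exI[of _ "C * L"]) auto
qed

end
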